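(* For relatively prime integers $r, s$ put $u = r^2 + s^2$, $v = 2r^2 - s^2$, and let \[ \mathcal{S} = \{\pm u(u+v),\ \pm u(u-v),\ \pm v(u+v),\ \pm v(u-v)\}. \] Then for all but finitely many pairs $(r,s)$ of relatively prime integers with $r \neq 0$, the eight elements of $\mathcal{S}$ represent eight pairwise distinct classes in $\mathbb{Q}^\times/(\mathbb{Q}^\times)^2$.
   Context: $\mathbb{Q}^\times/(\mathbb{Q}^\times)^2$ denotes the group of nonzero rationals modulo nonzero squares; two nonzero rationals represent the same class iff their quotient is a square of a rational. *)

theory Defs
  imports Complex_Main
begin

definition same_sq_class :: "rat \<Rightarrow> rat \<Rightarrow> bool" where
  "same_sq_class a b \<longleftrightarrow> a \<noteq> 0 \<and> b \<noteq> 0 \<and> (\<exists>q::rat. a / b = q ^ 2)"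

definition u_of :: "int \<Rightarrow> int \<Rightarrow> int" where
  "u_of r s = r ^ 2 + s ^ 2"

definition v_of :: "int \<Rightarrow> int \<Rightarrow> int" where
  "v_of r s = 2 * r ^ 2 - s ^ 2"

definition S_list :: "int \<Rightarrow> int \<Rightarrow> int list" where
  "S_list r s = (let u = u_of r s; v = v_of r s in
     [u * (u + v), - (u * (u + v)), u * (u - v), - (u * (u - v)),
      v * (u + v), - (v * (u + v)), v * (u - v), - (v * (u - v))])"

definition eight_distinct_classes :: "int \<Rightarrow> int \<Rightarrow> bool" where
  "eight_distinct_classes r s \<longleftrightarrow>
     (\<forall>i<8. S_list r s ! i \<noteq> 0) \<and>
     (\<forall>i<8. \<forall>j<8. i \<noteq> j \<longrightarrow>
        \<not> same_sq_class (of_int (S_list r s ! i)) (of_int (S_list r s ! j)))"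

end

(*
  The eight elements are e * a * b with e = 1 or -1, a in {u, v} and b in {u + v, u - v}. The
  product of two of them is, up to a nonzero square, e * (u v)^i * ((u + v) (u - v))^j, where
  (e, i, j) records the coordinates in which they differ; so it suffices that none of these seven
  integers is a square. As u + v = 3 r^2 while 3 divides none of u, v, u - v, the four with j = 1
  contain the prime 3 to an odd power. Since u and v are coprime, u v = n^2 would make u and v
  squares with sum 3 r^2, forcing 3 | u; and -u v = n^2 would make r^2 + s^2 and s^2 - 2 r^2 both
  squares. That system has no coprime solution with r <> 0 by Fermat descent: parametrising both
  equations and applying the four number lemma yields a solution with smaller |r|.
  In particular no pair (r, s) is exceptional.
*)

theory Submission
  imports Defs "HOL-Computational_Algebra.Nth_Powers"
begin

section \<open>Squares and coprime factorisations\<close>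

lemma three_dvd_sum_squares:
  fixes x y :: int
  assumes "3 dvd x\<^sup>2 + y\<^sup>2"
  shows "3 dvd x" "3 dvd y"
proof -
  have "((x mod 3)\<^sup>2 + (y mod 3)\<^sup>2) mod 3 = ((x mod 3)\<^sup>2 mod 3 + (y mod 3)\<^sup>2 mod 3) mod 3"
    by (rule mod_add_eq[symmetric])
  also have "\<dots> = (x\<^sup>2 + y\<^sup>2) mod 3"
    by (simp only: power_mod mod_add_eq)
  finally have "((x mod 3)\<^sup>2 + (y mod 3)\<^sup>2) mod 3 = 0"
    using assms by simp
  moreover have "x mod 3 \<in> {0, 1, 2}" "y mod 3 \<in> {0, 1, 2}" by auto
  ultimately have "x mod 3 = 0 \<and> y mod 3 = 0" by auto
  then show "3 dvd x" "3 dvd y" by auto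
qed

lemma square_mod_four:
  fixes x :: int
  shows "x\<^sup>2 mod 4 = (if even x then 0 else 1)"
proof (cases "even x")
  case True
  then obtain k where "x = 2 * k" by blast
  then show ?thesis by (simp add: power_mult_distrib)
next
  case False
  then obtain k where "x = 2 * k + 1" using oddE by blast
  then have "x\<^sup>2 = 1 + (k\<^sup>2 + k) * 4" by (simp add: power2_eq_square algebra_simps)
  then show ?thesis using False by (simp only: mod_mult_self1) simp
qed

lemma not_square_three_mult:
  fixes X :: int
  assumes "\<not> 3 dvd X"
  shows "\<not> is_square (3 * X)"
proof
  assume "is_square (3 * X)"
  then obtain y where y: "3 * X = y\<^sup>2" by (auto elim: is_nth_powerE)
  then have "3 dvd y\<^sup>2" by (metis dvd_triv_left)
  then have "3 dvd y" by (rule prime_dvd_power[rotated]) simp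
  then obtain z where "y = 3 * z" by blast
  then have "X = 3 * z\<^sup>2" using y by (simp add: power_mult_distrib)
  then show False using assms by simp
qed

lemma coprime_mult_eq_square_int:
  fixes X Y t :: int
  assumes "coprime X Y" "X > 0" "Y > 0" "t \<ge> 0" "X * Y = t\<^sup>2"
  obtains m n where "m > 0" "n > 0" "X = m\<^sup>2" "Y = n\<^sup>2" "t = m * n"
proof -
  have "coprime (nat X) (nat Y)" using assms by (simp add: coprime_int_iff[symmetric])
  moreover have "nat X * nat Y = (nat t)\<^sup>2"
    using assms by (simp add: nat_mult_distrib[symmetric] nat_power_eq)
  ultimately have "is_square (nat X)" "is_square (nat Y)"
    using is_nth_power_mult_coprime_natD[of "nat X" "nat Y" 2] assms by auto
  then obtain m' n' where "nat X = m'\<^sup>2" "nat Y = n'\<^sup>2" unfolding is_nth_power_def by blast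
  then have "int (nat X) = (int m')\<^sup>2" "int (nat Y) = (int n')\<^sup>2" by simp_all
  then have XY: "X = (int m')\<^sup>2" "Y = (int n')\<^sup>2" using assms by simp_all
  moreover have "t\<^sup>2 = (int m' * int n')\<^sup>2" using XY assms by (simp add: power_mult_distrib)
  then have "t = int m' * int n'" using assms by (simp add: power2_eq_iff_nonneg)
  ultimately show thesis using that[of "int m'" "int n'"] assms by auto
qed

lemma odd_coprime_half_sum_diff:
  fixes x y :: int
  assumes "odd x" "odd y" "coprime x y" "0 \<le> y" "y < x"
  obtains X Y where "X > 0" "Y > 0" "coprime X Y" "x = Y + X" "y = Y - X"
proof -
  define X where "X = (x - y) div 2"
  define Y where "Y = (x + y) div 2"
  have "x - y = 2 * X" "x + y = 2 * Y" using assms by (simp_all add: X_def Y_def)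
  then have "X > 0" "Y > 0" "x = Y + X" "y = Y - X" using assms by linarith+
  moreover have "coprime X Y"
  proof (rule coprimeI)
    fix c assume "c dvd X" "c dvd Y"
    then have "c dvd x" "c dvd y" using \<open>x = Y + X\<close> \<open>y = Y - X\<close> by simp_all
    then show "is_unit c" using assms(3) coprime_common_divisor by blast
  qed
  ultimately show thesis using that by blast
qed

lemma pythagorean_triple_even_leg:
  fixes r s a :: int
  assumes "coprime r s" "r > 0" "s > 0" "even r" "r\<^sup>2 + s\<^sup>2 = a\<^sup>2"
  obtains m n where "m > 0" "n > 0" "coprime m n" "r = 2 * m * n" "s = m\<^sup>2 - n\<^sup>2"
    "\<bar>a\<bar> = m\<^sup>2 + n\<^sup>2"
proof -
  have "odd s" using assms(1,4) coprime_common_divisor[of r s 2] by auto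
  then have "odd \<bar>a\<bar>" using assms(4,5) by (metis even_add even_power power2_abs zero_less_numeral)
  have "0 < r\<^sup>2" using assms(2) by simp
  then have "s\<^sup>2 < \<bar>a\<bar>\<^sup>2" using assms(5) unfolding power2_abs by linarith
  then have "s < \<bar>a\<bar>" by (rule power2_less_imp_less) simp
  have diff: "\<bar>a\<bar>\<^sup>2 - s\<^sup>2 = r\<^sup>2" using assms(5) unfolding power2_abs by linarith
  have "coprime \<bar>a\<bar> s"
  proof (rule coprimeI)
    fix c assume "c dvd \<bar>a\<bar>" "c dvd s"
    then have "c dvd \<bar>a\<bar>\<^sup>2 - s\<^sup>2" by (auto intro!: dvd_diff simp: power2_eq_square)
    then have "c dvd r\<^sup>2" unfolding diff .
    moreover have "coprime (r\<^sup>2) s" using assms(1) by simp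
    ultimately show "is_unit c" using \<open>c dvd s\<close> coprime_common_divisor by blast
  qed
  moreover have "0 \<le> s" using assms(3) by simp
  ultimately obtain X Y where XY: "X > 0" "Y > 0" "coprime X Y" "\<bar>a\<bar> = Y + X" "s = Y - X"
    using odd_coprime_half_sum_diff \<open>odd \<bar>a\<bar>\<close> \<open>odd s\<close> \<open>s < \<bar>a\<bar>\<close> by blast
  obtain t where t: "r = 2 * t" using assms(4) by blast
  have "4 * (X * Y) = \<bar>a\<bar>\<^sup>2 - s\<^sup>2" unfolding XY(4,5) by (simp add: power2_eq_square algebra_simps)
  also have "\<dots> = 4 * t\<^sup>2" using diff t by (simp add: power_mult_distrib)
  finally obtain n m where nm: "n > 0" "m > 0" "X = n\<^sup>2" "Y = m\<^sup>2" "t = n * m"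
    using coprime_mult_eq_square_int[OF XY(3,1,2)] t assms(2) by auto
  have "coprime m n" using XY(3) nm by (simp add: coprime_commute)
  then show thesis using that[of m n] nm XY t by simp
qed

lemma coprime_mult_eq_twice_square_int:
  fixes P Q t :: int
  assumes "coprime P Q" "P > 0" "Q > 0" "t \<ge> 0" "P * Q = 2 * t\<^sup>2"
  obtains p q where "p > 0" "q > 0" "t = p * q" "P + Q = p\<^sup>2 + 2 * q\<^sup>2"
proof -
  have even_case: "\<exists>p q. p > 0 \<and> q > 0 \<and> t = p * q \<and> P + Q = p\<^sup>2 + 2 * q\<^sup>2"
    if "coprime P Q" "P > 0" "Q > 0" "P * Q = 2 * t\<^sup>2" "even P" for P Q
  proof -
    obtain P' where P': "P = 2 * P'" using \<open>even P\<close> by blast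
    have "coprime P' Q" "P' > 0" "P' * Q = t\<^sup>2" using that P' by simp_all
    then obtain q p where "q > 0" "p > 0" "P' = q\<^sup>2" "Q = p\<^sup>2" "t = q * p"
      using coprime_mult_eq_square_int \<open>Q > 0\<close> \<open>t \<ge> 0\<close> by metis
    then show ?thesis using P' by auto
  qed
  have "even (P * Q)" using assms(5) by simp
  then have "even P \<or> even Q" by simp
  then show thesis
    using even_case[of P Q] even_case[of Q P] assms that by (auto simp: coprime_commute ac_simps)
qed

lemma four_number_lemma:
  fixes m n p q :: int
  assumes "m * n = p * q" "m > 0" "n > 0" "p > 0" "q > 0"
  obtains \<alpha> \<beta> \<gamma> \<delta> where "\<alpha> > 0" "\<beta> > 0" "\<gamma> > 0" "\<delta> > 0" "coprime \<beta> \<gamma>"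
    "m = \<alpha> * \<beta>" "p = \<alpha> * \<gamma>" "n = \<gamma> * \<delta>" "q = \<beta> * \<delta>"
proof -
  define \<alpha> where "\<alpha> = gcd m p"
  define \<beta> where "\<beta> = m div \<alpha>"
  define \<gamma> where "\<gamma> = p div \<alpha>"
  have "\<alpha> > 0" using assms(2) by (simp add: \<alpha>_def)
  have m: "m = \<alpha> * \<beta>" and p: "p = \<alpha> * \<gamma>" by (simp_all add: \<alpha>_def \<beta>_def \<gamma>_def)
  have "coprime \<beta> \<gamma>"
    unfolding \<beta>_def \<gamma>_def \<alpha>_def using assms(2) by (intro div_gcd_coprime) simp
  have "\<beta> > 0" "\<gamma> > 0" using assms(2,4) m p \<open>\<alpha> > 0\<close> by (simp_all add: zero_less_mult_iff)
  have "\<alpha> * (\<beta> * n) = \<alpha> * (\<gamma> * q)" using assms(1) m p by (simp add: ac_simps)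
  then have \<beta>n: "\<beta> * n = \<gamma> * q" using \<open>\<alpha> > 0\<close> by simp
  then have "\<gamma> dvd n" using \<open>coprime \<beta> \<gamma>\<close>
    by (metis coprime_commute coprime_dvd_mult_right_iff dvd_triv_left)
  then obtain \<delta> where n: "n = \<gamma> * \<delta>" by blast
  then have "q = \<beta> * \<delta>" using \<beta>n \<open>\<gamma> > 0\<close> by (simp add: ac_simps)
  moreover have "\<delta> > 0" using assms(3) n \<open>\<gamma> > 0\<close> by (simp add: zero_less_mult_iff)
  ultimately show thesis
    using that \<open>\<alpha> > 0\<close> \<open>\<beta> > 0\<close> \<open>\<gamma> > 0\<close> \<open>coprime \<beta> \<gamma>\<close> m p n by blast
qed

section \<open>Descent for r^2 + s^2 = a^2, s^2 - 2 r^2 = b^2\<close>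

lemma solution_parity:
  fixes r s a b :: int
  assumes "coprime r s" "r\<^sup>2 + s\<^sup>2 = a\<^sup>2" "s\<^sup>2 - 2 * r\<^sup>2 = b\<^sup>2"
  shows "even r" "odd s"
proof -
  have "\<not> (even r \<and> even s)" using assms(1) coprime_common_divisor[of r s 2] by auto
  moreover have "\<not> (odd r \<and> odd s)"
    using square_mod_four[of r] square_mod_four[of s] square_mod_four[of a] assms(2) by presburger
  moreover have "\<not> (odd r \<and> even s)"
    using square_mod_four[of r] square_mod_four[of s] square_mod_four[of b] assms(3) by presburger
  ultimately show "even r" "odd s" by blast+
qed

lemma descended_solution:
  fixes \<alpha> \<beta> \<gamma> \<delta> :: int
  assumes pos: "\<alpha> > 0" "\<beta> > 0" "\<delta> > 0" and "coprime \<alpha> \<delta>" "coprime \<beta> \<gamma>"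
    and eq: "\<alpha>\<^sup>2 * (\<beta>\<^sup>2 - \<gamma>\<^sup>2) = (\<gamma>\<^sup>2 + 2 * \<beta>\<^sup>2) * \<delta>\<^sup>2"
  shows "\<delta>\<^sup>2 + \<alpha>\<^sup>2 = \<beta>\<^sup>2" "\<alpha>\<^sup>2 - 2 * \<delta>\<^sup>2 = \<gamma>\<^sup>2"
proof -
  have "coprime (\<alpha>\<^sup>2) (\<delta>\<^sup>2)" using \<open>coprime \<alpha> \<delta>\<close> by simp
  moreover have "\<alpha>\<^sup>2 dvd (\<gamma>\<^sup>2 + 2 * \<beta>\<^sup>2) * \<delta>\<^sup>2" by (metis eq dvd_triv_left)
  ultimately have "\<alpha>\<^sup>2 dvd \<gamma>\<^sup>2 + 2 * \<beta>\<^sup>2" by (simp add: coprime_dvd_mult_left_iff)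
  then obtain k where k: "\<gamma>\<^sup>2 + 2 * \<beta>\<^sup>2 = \<alpha>\<^sup>2 * k" by blast
  have "\<alpha>\<^sup>2 * (\<beta>\<^sup>2 - \<gamma>\<^sup>2) = \<alpha>\<^sup>2 * (\<delta>\<^sup>2 * k)" using eq k by (simp add: ac_simps)
  then have k': "\<beta>\<^sup>2 - \<gamma>\<^sup>2 = \<delta>\<^sup>2 * k" using pos by simp
  have \<beta>: "3 * \<beta>\<^sup>2 = k * (\<alpha>\<^sup>2 + \<delta>\<^sup>2)" and \<gamma>: "3 * \<gamma>\<^sup>2 = k * (\<alpha>\<^sup>2 - 2 * \<delta>\<^sup>2)"
    using k k' by algebra+
  have "0 < k * (\<alpha>\<^sup>2 + \<delta>\<^sup>2)" using \<beta> pos by (simp flip: \<beta>)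
  moreover have "0 < \<alpha>\<^sup>2 + \<delta>\<^sup>2" using pos by (simp add: add_pos_pos)
  ultimately have "k > 0" by (simp add: zero_less_mult_iff)
  have "gcd (3 * \<beta>\<^sup>2) (3 * \<gamma>\<^sup>2) = 3"
    using \<open>coprime \<beta> \<gamma>\<close> by (simp add: gcd_mult_left)
  then have "k dvd 3" using \<beta> \<gamma> by (metis dvd_triv_left gcd_greatest)
  have "k \<le> 3" using \<open>k dvd 3\<close> by (rule zdvd_imp_le) simp
  then have "k \<in> {1, 2, 3}" using \<open>k > 0\<close> by auto
  then have "k = 1 \<or> k = 3" using \<open>k dvd 3\<close> by auto
  moreover have "k \<noteq> 1"
  proof
    assume "k = 1"
    then have "3 dvd \<alpha>\<^sup>2 + \<delta>\<^sup>2" using \<beta> by (metis dvd_triv_left mult_1)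
    then have "3 dvd \<alpha>" "3 dvd \<delta>" by (rule three_dvd_sum_squares)+
    then show False using \<open>coprime \<alpha> \<delta>\<close> coprime_common_divisor[of \<alpha> \<delta> 3] by simp
  qed
  ultimately have "k = 3" by blast
  then show "\<delta>\<^sup>2 + \<alpha>\<^sup>2 = \<beta>\<^sup>2" "\<alpha>\<^sup>2 - 2 * \<delta>\<^sup>2 = \<gamma>\<^sup>2" using \<beta> \<gamma> by simp_all
qed

lemma solution_parametrization:
  fixes r s a b :: int
  assumes "coprime r s" "r > 0" "r\<^sup>2 + s\<^sup>2 = a\<^sup>2" "s\<^sup>2 - 2 * r\<^sup>2 = b\<^sup>2"
  obtains m n p q where "m > 0" "n > 0" "p > 0" "q > 0" "coprime m n" "r = 2 * m * n"
    "m * n = p * q" "m\<^sup>2 - n\<^sup>2 = p\<^sup>2 + 2 * q\<^sup>2"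
proof -
  have "even r" "odd s" using solution_parity[OF assms(1,3,4)] by auto
  define s' where "s' = \<bar>s\<bar>"
  define b' where "b' = \<bar>b\<bar>"
  have s': "odd s'" "s' > 0" "coprime r s'" "r\<^sup>2 + s'\<^sup>2 = a\<^sup>2"
    using \<open>odd s\<close> assms by (auto simp: s'_def)
  have b': "s'\<^sup>2 - 2 * r\<^sup>2 = b'\<^sup>2" "b' \<ge> 0" using assms(4) by (simp_all add: s'_def b'_def)
  \<comment> \<open>(m, n) parametrises the triple (r, s, a); (p, q) will come from (s - b) (s + b) = 2 r^2.\<close>
  obtain m n where mn: "m > 0" "n > 0" "coprime m n" "r = 2 * m * n" "s' = m\<^sup>2 - n\<^sup>2"
    using pythagorean_triple_even_leg[OF s'(3) assms(2) s'(2) \<open>even r\<close> s'(4)] by blast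
  have "odd (b'\<^sup>2)" unfolding b'(1)[symmetric] using \<open>odd s'\<close> by simp
  then have "odd b'" by simp
  have diff: "s'\<^sup>2 - b'\<^sup>2 = 2 * r\<^sup>2" using b'(1) by simp
  have "0 < r\<^sup>2" using assms(2) by simp
  then have "b'\<^sup>2 < s'\<^sup>2" using b'(1) by linarith
  then have "b' < s'" by (rule power2_less_imp_less) (use s' in simp)
  have "coprime s' b'"
  proof (rule coprimeI)
    fix c assume "c dvd s'" "c dvd b'"
    then have "c dvd s'\<^sup>2 - b'\<^sup>2" by (auto intro!: dvd_diff simp: power2_eq_square)
    then have "c dvd 2 * r\<^sup>2" unfolding diff .
    moreover have "coprime (2 * r\<^sup>2) s'" using s'(1,3) by simp
    ultimately show "is_unit c" using \<open>c dvd s'\<close> coprime_common_divisor by blast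
  qed
  then obtain P Q where PQ: "P > 0" "Q > 0" "coprime P Q" "s' = Q + P" "b' = Q - P"
    using odd_coprime_half_sum_diff \<open>odd s'\<close> \<open>odd b'\<close> b'(2) \<open>b' < s'\<close> by blast
  have "4 * (P * Q) = s'\<^sup>2 - b'\<^sup>2" unfolding PQ(4,5) by (simp add: power2_eq_square algebra_simps)
  also have "\<dots> = 4 * (2 * (m * n)\<^sup>2)" using diff mn(4) by (simp add: power_mult_distrib)
  finally have "P * Q = 2 * (m * n)\<^sup>2" by simp
  moreover have "m * n \<ge> 0" using mn(1,2) by simp
  ultimately obtain p q where "p > 0" "q > 0" "m * n = p * q" "P + Q = p\<^sup>2 + 2 * q\<^sup>2"
    using coprime_mult_eq_twice_square_int[OF PQ(3,1,2)] by metis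
  then show thesis using that mn PQ(4) by simp
qed

lemma smaller_solution:
  fixes r s a b :: int
  assumes "coprime r s" "r > 0" "r\<^sup>2 + s\<^sup>2 = a\<^sup>2" "s\<^sup>2 - 2 * r\<^sup>2 = b\<^sup>2"
  obtains r' s' a' b' where "0 < r'" "r' < r" "coprime r' s'"
    "r'\<^sup>2 + s'\<^sup>2 = a'\<^sup>2" "s'\<^sup>2 - 2 * r'\<^sup>2 = b'\<^sup>2"
proof -
  obtain m n p q where mn: "m > 0" "n > 0" "p > 0" "q > 0" "coprime m n" "r = 2 * m * n"
    "m * n = p * q" "m\<^sup>2 - n\<^sup>2 = p\<^sup>2 + 2 * q\<^sup>2"
    using solution_parametrization[OF assms] by blast
  obtain \<alpha> \<beta> \<gamma> \<delta> where "\<alpha> > 0" "\<beta> > 0" "\<gamma> > 0" "\<delta> > 0" "coprime \<beta> \<gamma>"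
    and m: "m = \<alpha> * \<beta>" and p: "p = \<alpha> * \<gamma>" and n: "n = \<gamma> * \<delta>" and q: "q = \<beta> * \<delta>"
    using four_number_lemma[OF mn(7,1-4)] by blast
  have "coprime \<alpha> \<delta>" using \<open>coprime m n\<close> by (simp add: m n)
  have "(\<alpha> * \<beta>)\<^sup>2 - (\<gamma> * \<delta>)\<^sup>2 = (\<alpha> * \<gamma>)\<^sup>2 + 2 * (\<beta> * \<delta>)\<^sup>2"
    using mn(8) by (simp add: m n p q)
  then have "\<alpha>\<^sup>2 * (\<beta>\<^sup>2 - \<gamma>\<^sup>2) = (\<gamma>\<^sup>2 + 2 * \<beta>\<^sup>2) * \<delta>\<^sup>2" by algebra
  then have "\<delta>\<^sup>2 + \<alpha>\<^sup>2 = \<beta>\<^sup>2" "\<alpha>\<^sup>2 - 2 * \<delta>\<^sup>2 = \<gamma>\<^sup>2"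
    using descended_solution \<open>\<alpha> > 0\<close> \<open>\<beta> > 0\<close> \<open>\<delta> > 0\<close> \<open>coprime \<alpha> \<delta>\<close> \<open>coprime \<beta> \<gamma>\<close>
    by blast+
  moreover have "\<delta> < r"
  proof -
    have "1 \<le> \<alpha> * \<beta> * \<gamma>" using \<open>\<alpha> > 0\<close> \<open>\<beta> > 0\<close> \<open>\<gamma> > 0\<close> by (simp add: int_one_le_iff_zero_less)
    then have "\<delta> \<le> \<delta> * (\<alpha> * \<beta> * \<gamma>)" using \<open>\<delta> > 0\<close> by simp
    also have "\<delta> * (\<alpha> * \<beta> * \<gamma>) < r" using mn(6) \<open>\<delta> > 0\<close> \<open>\<alpha> > 0\<close> \<open>\<beta> > 0\<close> \<open>\<gamma> > 0\<close>
      by (simp add: m n ac_simps)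
    finally show ?thesis .
  qed
  moreover have "coprime \<delta> \<alpha>" using \<open>coprime \<alpha> \<delta>\<close> by (simp add: coprime_commute)
  ultimately show thesis using that \<open>\<delta> > 0\<close> by blast
qed

lemma no_nontrivial_coprime_solution:
  fixes r s a b :: int
  assumes "coprime r s" "r \<noteq> 0" "r\<^sup>2 + s\<^sup>2 = a\<^sup>2" "s\<^sup>2 - 2 * r\<^sup>2 = b\<^sup>2"
  shows False
  using assms
proof (induction "nat \<bar>r\<bar>" arbitrary: r s a b rule: less_induct)
  case less
  have "coprime \<bar>r\<bar> s" "\<bar>r\<bar> > 0" "\<bar>r\<bar>\<^sup>2 + s\<^sup>2 = a\<^sup>2" "s\<^sup>2 - 2 * \<bar>r\<bar>\<^sup>2 = b\<^sup>2"
    using less.prems by simp_all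
  then obtain r' s' a' b' where "0 < r'" "r' < \<bar>r\<bar>"
    and solution: "coprime r' s'" "r'\<^sup>2 + s'\<^sup>2 = a'\<^sup>2" "s'\<^sup>2 - 2 * r'\<^sup>2 = b'\<^sup>2"
    by (rule smaller_solution)
  then have "nat \<bar>r'\<bar> < nat \<bar>r\<bar>" by simp
  then show False using less.hyps[of r' s' a' b'] solution \<open>0 < r'\<close> by simp
qed

section \<open>Square classes\<close>

lemma is_square_of_int_rat_iff: "is_square (of_int n :: rat) \<longleftrightarrow> is_square n"
proof
  assume "is_square (of_int n :: rat)"
  then obtain q :: rat where q: "of_int n = q\<^sup>2" by (auto elim: is_nth_powerE)
  obtain a d where ad: "quotient_of q = (a, d)" by (cases "quotient_of q")
  have d: "d > 0" "coprime a d" using quotient_of_denom_pos[OF ad] quotient_of_coprime[OF ad] by auto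
  have "(of_int (n * d\<^sup>2) :: rat) = of_int (a\<^sup>2)"
    using q quotient_of_div[OF ad] d by (simp add: power_divide)
  then have nd: "n * d\<^sup>2 = a\<^sup>2" by (simp only: of_int_eq_iff)
  have "is_unit (d\<^sup>2)"
    using d(2) nd by (metis coprime_common_divisor coprime_power_left_iff coprime_power_right_iff dvd_refl dvd_triv_right)
  then have "d\<^sup>2 = 1" using d(1) by simp
  then show "is_square n" using nd by auto
qed (auto elim: is_nth_powerE)

lemma same_sq_class_of_int_iff:
  "same_sq_class (of_int x) (of_int y) \<longleftrightarrow> x \<noteq> 0 \<and> y \<noteq> 0 \<and> is_square (x * y)"
proof -
  have "(\<exists>q :: rat. of_int x / of_int y = q\<^sup>2) \<longleftrightarrow> is_square (of_int (x * y) :: rat)"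
    if "y \<noteq> 0" for x y :: int
  proof
    assume "\<exists>q :: rat. of_int x / of_int y = q\<^sup>2"
    then obtain q :: rat where "of_int x / of_int y = q\<^sup>2" by blast
    then have "of_int x = q\<^sup>2 * of_int y" using that by (simp add: field_simps)
    then have "of_int (x * y) = (q * of_int y :: rat)\<^sup>2" by (simp add: power2_eq_square)
    then show "is_square (of_int (x * y) :: rat)" by auto
  next
    assume "is_square (of_int (x * y) :: rat)"
    then obtain z where "of_int (x * y) = (z :: rat)\<^sup>2" by (auto elim: is_nth_powerE)
    then have "of_int x / of_int y = (z / of_int y)\<^sup>2"
      using that by (simp add: power_divide power2_eq_square field_simps)
    then show "\<exists>q :: rat. of_int x / of_int y = q\<^sup>2" ..
  qed
  then show ?thesis
    unfolding same_sq_class_def is_square_of_int_rat_iff[symmetric] by auto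
qed

lemma not_same_sq_class_triple_products:
  fixes a b c :: "bool \<Rightarrow> int"
  assumes nonzero: "\<And>i. a i \<noteq> 0" "\<And>j. b j \<noteq> 0" "\<And>e. c e \<noteq> 0"
    and nonsquare: "\<And>e i j. e \<or> i \<or> j \<Longrightarrow> \<not> is_square
      ((if e then c False * c True else 1) * (if i then a False * a True else 1) *
       (if j then b False * b True else 1))"
    and "(e, i, j) \<noteq> (e', i', j')"
  shows "\<not> same_sq_class (of_int (c e * a i * b j)) (of_int (c e' * a i' * b j'))"
proof
  define K where "K = (if e \<noteq> e' then c False * c True else 1) *
    (if i \<noteq> i' then a False * a True else 1) * (if j \<noteq> j' then b False * b True else 1)"
  define R where "R = (if e = e' then c e else 1) * (if i = i' then a i else 1) *
    (if j = j' then b j else 1)"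
  \<comment> \<open>In each coordinate the two factors multiply to a square or to the product of both values.\<close>
  have product: "c e * a i * b j * (c e' * a i' * b j') = K * R\<^sup>2"
    unfolding K_def R_def
    by (cases e; cases e'; cases i; cases i'; cases j; cases j')
       (simp_all add: power2_eq_square ac_simps)
  have "R\<^sup>2 \<noteq> 0" using nonzero by (simp add: R_def)
  moreover assume "same_sq_class (of_int (c e * a i * b j)) (of_int (c e' * a i' * b j'))"
  ultimately have "is_square K"
    unfolding same_sq_class_of_int_iff product
    using is_nth_power_mult_cancel_right[of 2 "R\<^sup>2" K] by auto
  moreover have "\<not> is_square K"
    unfolding K_def using nonsquare[of "e \<noteq> e'" "i \<noteq> i'" "j \<noteq> j'"] assms(5) by auto
  ultimately show False by contradiction
qed

lemma eight_distinct_classesI: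
  fixes r s :: int
  defines "u \<equiv> u_of r s" and "v \<equiv> v_of r s"
  assumes nonzero: "u \<noteq> 0" "v \<noteq> 0" "u + v \<noteq> 0" "u - v \<noteq> 0"
    and nonsquare: "\<And>e i j. e \<or> i \<or> j \<Longrightarrow> \<not> is_square
      ((if e then -1 else 1) * (if i then u * v else 1) * (if j then (u + v) * (u - v) else 1))"
  shows "eight_distinct_classes r s"
proof -
  define c :: "bool \<Rightarrow> int" where "c e = (if e then -1 else 1)" for e
  define a where "a i = (if i then v else u)" for i
  define b where "b j = (if j then u - v else u + v)" for j
  define f where "f = (\<lambda>(e, i, j). c e * a i * b j)"
  define ts where "ts = [(False, False, False), (True, False, False), (False, False, True),
    (True, False, True), (False, True, False), (True, True, False), (False, True, True),
    (True, True, True)]"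
  have S: "S_list r s = map f ts"
    by (simp add: S_list_def ts_def f_def a_def b_def c_def u_def v_def Let_def)
  have ts: "length ts = 8" "distinct ts" by (simp_all add: ts_def)
  have f_nonzero: "f t \<noteq> 0" for t
    using nonzero by (auto simp: f_def a_def b_def c_def split: prod.splits)
  have f_classes: "\<not> same_sq_class (of_int (f t)) (of_int (f t'))" if "t \<noteq> t'" for t t'
  proof -
    obtain e i j e' i' j' where "t = (e, i, j)" "t' = (e', i', j')" using prod_cases3 by metis
    moreover have "\<not> same_sq_class (of_int (c e * a i * b j)) (of_int (c e' * a i' * b j'))"
    proof (rule not_same_sq_class_triple_products)
      show "(e, i, j) \<noteq> (e', i', j')" using that \<open>t = (e, i, j)\<close> \<open>t' = (e', i', j')\<close> by simp
      have "(if e then c False * c True else 1) * (if i then a False * a True else 1) *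
        (if j then b False * b True else 1) =
        (if e then -1 else 1) * (if i then u * v else 1) * (if j then (u + v) * (u - v) else 1)"
        for e i j by (simp add: a_def b_def c_def)
      then show "\<not> is_square ((if e then c False * c True else 1) * (if i then a False * a True else 1) *
        (if j then b False * b True else 1))" if "e \<or> i \<or> j" for e i j
        using nonsquare[OF that] by simp
    qed (use nonzero in \<open>simp_all add: a_def b_def c_def\<close>)
    ultimately show ?thesis by (simp add: f_def)
  qed
  show ?thesis
    unfolding eight_distinct_classes_def S
    using ts f_nonzero f_classes by (auto simp: nth_eq_iff_index_eq)
qed

lemma u_of_plus_v_of: "u_of r s + v_of r s = 3 * r\<^sup>2"
  by (simp add: u_of_def v_of_def)

lemma two_u_of_minus_v_of: "2 * u_of r s - v_of r s = 3 * s\<^sup>2"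
  by (simp add: u_of_def v_of_def)

lemma not_three_dvd_u_of:
  assumes "coprime r s"
  shows "\<not> 3 dvd u_of r s"
proof
  assume "3 dvd u_of r s"
  then have "3 dvd r" "3 dvd s" unfolding u_of_def by (rule three_dvd_sum_squares)+
  then show False using assms coprime_common_divisor[of r s 3] by simp
qed

lemma not_three_dvd_v_of:
  assumes "coprime r s"
  shows "\<not> 3 dvd v_of r s"
proof
  assume "3 dvd v_of r s"
  then have "3 dvd 3 * r\<^sup>2 - v_of r s" by simp
  moreover have "3 * r\<^sup>2 - v_of r s = u_of r s" using u_of_plus_v_of[of r s] by linarith
  ultimately show False using not_three_dvd_u_of[OF assms] by simp
qed

lemma not_three_dvd_u_of_minus_v_of:
  assumes "coprime r s"
  shows "\<not> 3 dvd u_of r s - v_of r s"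
proof
  assume "3 dvd u_of r s - v_of r s"
  then have "3 dvd 3 * s\<^sup>2 - (u_of r s - v_of r s)" by simp
  moreover have "3 * s\<^sup>2 - (u_of r s - v_of r s) = u_of r s" using two_u_of_minus_v_of[of r s] by linarith
  ultimately show False using not_three_dvd_u_of[OF assms] by simp
qed

lemma coprime_u_of_v_of:
  assumes "coprime r s"
  shows "coprime (u_of r s) (v_of r s)"
proof (rule coprimeI)
  fix c assume c: "c dvd u_of r s" "c dvd v_of r s"
  then have "c dvd 3 * r\<^sup>2" "c dvd 3 * s\<^sup>2"
    by (metis u_of_plus_v_of dvd_add, metis two_u_of_minus_v_of dvd_diff dvd_mult)
  moreover have "gcd (3 * r\<^sup>2) (3 * s\<^sup>2) = 3" using assms by (simp add: gcd_mult_left)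
  ultimately have "c dvd 3" by (metis gcd_greatest)
  moreover have "coprime 3 (u_of r s)"
    using not_three_dvd_u_of[OF assms] by (intro prime_imp_coprime) simp_all
  ultimately show "is_unit c" using c(1) coprime_common_divisor by blast
qed

lemma u_of_pos:
  assumes "coprime r s"
  shows "u_of r s > 0"
proof -
  have "r \<noteq> 0 \<or> s \<noteq> 0" using assms by auto
  then show ?thesis by (auto simp: u_of_def add_pos_nonneg add_nonneg_pos)
qed

lemma not_square_u_of_mult_v_of:
  assumes "coprime r s"
  shows "\<not> is_square (u_of r s * v_of r s)"
proof
  assume "is_square (u_of r s * v_of r s)"
  then obtain z where z: "u_of r s * v_of r s = \<bar>z\<bar>\<^sup>2" by (auto elim: is_nth_powerE)
  have "v_of r s \<noteq> 0" using not_three_dvd_v_of[OF assms] by auto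
  moreover have "0 \<le> u_of r s * v_of r s" unfolding z by simp
  ultimately have "v_of r s > 0" using u_of_pos[OF assms] by (simp add: zero_le_mult_iff)
  then obtain m n where "m > 0" "n > 0" "u_of r s = m\<^sup>2" "v_of r s = n\<^sup>2" "\<bar>z\<bar> = m * n"
    by (rule coprime_mult_eq_square_int[OF coprime_u_of_v_of[OF assms] u_of_pos[OF assms] _ abs_ge_zero z])
  then have "m\<^sup>2 + n\<^sup>2 = 3 * r\<^sup>2" using u_of_plus_v_of[of r s] by simp
  then have "3 dvd m\<^sup>2 + n\<^sup>2" by simp
  then have "3 dvd m" by (rule three_dvd_sum_squares(1))
  then have "3 dvd u_of r s" unfolding \<open>u_of r s = m\<^sup>2\<close> power2_eq_square by (rule dvd_mult2)
  then show False using not_three_dvd_u_of[OF assms] by simp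
qed

lemma not_square_neg_u_of_mult_v_of:
  assumes "coprime r s" "r \<noteq> 0"
  shows "\<not> is_square (- (u_of r s * v_of r s))"
proof
  assume "is_square (- (u_of r s * v_of r s))"
  then obtain z where z: "u_of r s * - v_of r s = \<bar>z\<bar>\<^sup>2" by (auto elim: is_nth_powerE)
  have "v_of r s \<noteq> 0" using not_three_dvd_v_of[OF assms(1)] by auto
  moreover have "0 \<le> u_of r s * - v_of r s" unfolding z by simp
  ultimately have "- v_of r s > 0" using u_of_pos[OF assms(1)] by (simp add: mult_le_0_iff)
  moreover have "coprime (u_of r s) (- v_of r s)" using coprime_u_of_v_of[OF assms(1)] by simp
  ultimately obtain m n where "m > 0" "n > 0" "u_of r s = m\<^sup>2" "- v_of r s = n\<^sup>2" "\<bar>z\<bar> = m * n"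
    using coprime_mult_eq_square_int[OF _ u_of_pos[OF assms(1)] _ abs_ge_zero z] by metis
  then have "r\<^sup>2 + s\<^sup>2 = m\<^sup>2" "s\<^sup>2 - 2 * r\<^sup>2 = n\<^sup>2" by (simp_all add: u_of_def v_of_def)
  then show False using no_nontrivial_coprime_solution assms by blast
qed

lemma nontrivial_sq_class_products_not_square:
  fixes r s :: int
  defines "u \<equiv> u_of r s" and "v \<equiv> v_of r s"
  assumes "coprime r s" "r \<noteq> 0" "e \<or> i \<or> j"
  shows "\<not> is_square
    ((if e then -1 else 1) * (if i then u * v else 1) * (if j then (u + v) * (u - v) else 1))"
proof (cases j)
  case True
  define X where "X = (if e then -1 else 1) * (if i then u * v else 1) * (u - v)"
  have "prime (3 :: int)" by simp
  then have "\<not> 3 dvd X"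
    using not_three_dvd_u_of[OF assms(3)] not_three_dvd_v_of[OF assms(3)]
      not_three_dvd_u_of_minus_v_of[OF assms(3)]
    by (auto simp: X_def u_def v_def prime_dvd_mult_iff)
  then have "\<not> is_square (3 * X * r\<^sup>2)"
    using not_square_three_mult is_nth_power_mult_cancel_right[of 2 "r\<^sup>2"] assms(4) by auto
  moreover have "u + v = 3 * r\<^sup>2" using u_of_plus_v_of by (simp add: u_def v_def)
  then have "(if e then -1 else 1) * (if i then u * v else 1) * ((u + v) * (u - v)) = 3 * X * r\<^sup>2"
    unfolding X_def by (cases e; cases i) (simp_all add: algebra_simps)
  ultimately show ?thesis using True by simp
next
  case False
  then consider "i" | "\<not> i" "e" using assms(5) by blast
  then show ?thesis
  proof cases
    case 1
    then show ?thesis using False not_square_u_of_mult_v_of[OF assms(3)]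
      not_square_neg_u_of_mult_v_of[OF assms(3,4)] by (simp add: u_def v_def)
  next
    case 2
    have "\<not> is_square (-1 :: int)"
    proof
      assume "is_square (-1 :: int)"
      then obtain y :: int where "-1 = y\<^sup>2" by (auto elim: is_nth_powerE)
      then show False using zero_le_power2[of y] by linarith
    qed
    then show ?thesis using False 2 by simp
  qed
qed

lemma eight_distinct_classes_if_coprime:
  assumes "coprime r s" "r \<noteq> 0"
  shows "eight_distinct_classes r s"
proof (rule eight_distinct_classesI)
  show "u_of r s \<noteq> 0" using u_of_pos[OF assms(1)] by simp
  show "v_of r s \<noteq> 0" using not_three_dvd_v_of[OF assms(1)] by auto
  show "u_of r s + v_of r s \<noteq> 0" using u_of_plus_v_of[of r s] assms(2) by simp
  show "u_of r s - v_of r s \<noteq> 0" using not_three_dvd_u_of_minus_v_of[OF assms(1)] by auto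
qed (use nontrivial_sq_class_products_not_square assms in blast)

theorem lemma6p2:
  shows "finite {(r :: int, s :: int). coprime r s \<and> r \<noteq> 0 \<and> \<not> eight_distinct_classes r s}"
proof -
  have "{(r :: int, s :: int). coprime r s \<and> r \<noteq> 0 \<and> \<not> eight_distinct_classes r s} = {}"
    using eight_distinct_classes_if_coprime by auto
  then show ?thesis by (simp only: finite.emptyI)
qed

end
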